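(* Let $D=\mathrm{diag}(1,-1,1,-1,\ldots)=(1,-x)$, $\mathbb{F}^{\rm S}=(1,x(1+x))$, $\mathbb{L}^{\rm S}=(1+2x,x(1+x))$, let $\mathbf e=[1,1,1,\ldots]^T$, and let $C_n=\frac{1}{n+1}\binom{2n}{n}$ be the Catalan numbers. Then: (a) $D(\mathbb{F}^{\rm S})^{-1}D\,\mathbf e=[C_0,C_1,C_2,\ldots,C_n,\ldots]^T$; (b) $D(\mathbb{L}^{\rm S})^{-1}D\,\mathbf e=[C_0,3C_1,5C_2,\ldots,(2n+1)C_n,\ldots]^T$.
   Context: All matrices are infinite with rows and columns indexed by $0,1,2,\ldots$. For formal power series $g(x)=g_0+g_1x+\cdots$ with $g_0\ne0$ and $f(x)=f_1x+f_2x^2+\cdots$ with $f_1\ne0$, $(g(x),f(x))$ denotes the (Riordan) infinite lower triangular matrix whose $j$-th column has generating function $g(x)f(x)^j$. These matrices form a group under matrix multiplication with $(g,f)(h,l)=(g\cdot h(f),l(f))$. Since the matrices are lower triangular, each entry of the product with $\mathbf e$ is a finite row sum. *)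

theory Defs
  imports "HOL-Computational_Algebra.Formal_Power_Series"
begin

type_synonym imatrix = "nat \<Rightarrow> nat \<Rightarrow> real"

definition riordan :: "real fps \<Rightarrow> real fps \<Rightarrow> imatrix" where
  "riordan g f = (\<lambda>i j. fps_nth (g * f ^ j) i)"

definition lower_triangular :: "imatrix \<Rightarrow> bool" where
  "lower_triangular M \<longleftrightarrow> (\<forall>i j. i < j \<longrightarrow> M i j = 0)"

text \<open>Product of infinite lower triangular matrices (finite sums, since entries with
  k > i of the left factor vanish).\<close>
definition lt_mult :: "imatrix \<Rightarrow> imatrix \<Rightarrow> imatrix" where
  "lt_mult A B = (\<lambda>i j. \<Sum>k\<le>i. A i k * B k j)"

definition imat_one :: imatrix where
  "imat_one = (\<lambda>i j. if i = j then 1 else 0)"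

definition lt_inverse :: "imatrix \<Rightarrow> imatrix" where
  "lt_inverse A = (THE B. lower_triangular B \<and> lt_mult A B = imat_one \<and> lt_mult B A = imat_one)"

definition lt_mult_vec :: "imatrix \<Rightarrow> (nat \<Rightarrow> real) \<Rightarrow> (nat \<Rightarrow> real)" where
  "lt_mult_vec M v = (\<lambda>i. \<Sum>j\<le>i. M i j * v j)"

definition catalan :: "nat \<Rightarrow> real" where
  "catalan n = real ((2 * n) choose n) / real (n + 1)"

definition Dmat :: imatrix where
  "Dmat = riordan 1 (- fps_X)"

definition FS :: imatrix where
  "FS = riordan 1 (fps_X * (1 + fps_X))"

definition LS :: imatrix where
  "LS = riordan (1 + 2 * fps_X) (fps_X * (1 + fps_X))"

end

theory Submission
  imports Defs
begin

text \<open>A Riordan array acts on coefficient sequences by \<open>a \<mapsto> g \<cdot> (a \<circ> f)\<close>; hence the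
  row sums of \<open>(g, f)\<close> are the coefficients of \<open>g / (1 - f)\<close>, the inverse of \<open>(g, f)\<close> is
  \<open>(1 / (g \<circ> f\<^sup>-\<^sup>1), f\<^sup>-\<^sup>1)\<close>, and conjugation by \<open>D = (1, -x)\<close> turns \<open>(g, f)\<close> into
  \<open>(g(-x), -f(-x))\<close>. The compositional inverse of \<open>x(1 + x)\<close> is \<open>x C(-x)\<close>, where the
  Catalan series satisfies \<open>C = 1 + x C\<^sup>2\<close>, so the two conjugated inverses are \<open>(1, x C)\<close>
  and \<open>(B, x C)\<close> with \<open>B = \<Sum> binom(2n, n) x\<^sup>n = 1 / (1 - 2 x C)\<close>. Their row sums are
  \<open>C / (1 - x C) = C\<close> and \<open>B / (1 - x C) = 2 B - C\<close>. The identities for \<open>B\<close> and \<open>C\<close>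
  come from the differential equation \<open>(1 - 4x) B' = 2 B\<close>, which gives \<open>(1 - 4x) B\<^sup>2 = 1\<close>,
  together with the coefficientwise identity \<open>(1 - 4x) B = 1 - 2 x C\<close>.\<close>

unbundle fps_syntax

lemma fps_power_nth_below:
  fixes f :: "'a::comm_ring_1 fps"
  assumes "f $ 0 = 0" and "n < k"
  shows "(f ^ k) $ n = 0"
  using startsby_zero_power_prefix assms by blast

lemma fps_mult_power_nth_below:
  fixes f g :: "'a::comm_ring_1 fps"
  assumes "f $ 0 = 0" and "n < k"
  shows "(g * f ^ k) $ n = 0"
  using assms by (auto simp: fps_mult_nth fps_power_nth_below intro!: sum.neutral)

lemma lower_triangular_riordan: "f $ 0 = 0 \<Longrightarrow> lower_triangular (riordan g f)"
  by (simp add: lower_triangular_def riordan_def fps_mult_power_nth_below)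

lemma lt_mult_vec_riordan:
  assumes f0: "f $ 0 = 0"
  shows "lt_mult_vec (riordan g f) (fps_nth a) = fps_nth (g * (a oo f))"
proof
  fix i
  have "(g * (a oo f)) $ i = (\<Sum>m=0..i. g $ m * (\<Sum>k=0..i-m. a $ k * (f ^ k) $ (i - m)))"
    by (simp add: fps_mult_nth fps_compose_nth)
  also have "\<dots> = (\<Sum>m=0..i. g $ m * (\<Sum>k=0..i. a $ k * (f ^ k) $ (i - m)))"
  proof -
    have "(\<Sum>k=0..i-m. a $ k * (f ^ k) $ (i - m)) = (\<Sum>k=0..i. a $ k * (f ^ k) $ (i - m))" for m
      by (rule sum.mono_neutral_left) (auto simp: fps_power_nth_below[OF f0])
    then show ?thesis by simp
  qed
  also have "\<dots> = (\<Sum>k=0..i. a $ k * (\<Sum>m=0..i. g $ m * (f ^ k) $ (i - m)))"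
    by (simp only: sum_distrib_left mult.left_commute) (rule sum.swap)
  also have "\<dots> = lt_mult_vec (riordan g f) (fps_nth a) i"
    by (simp add: lt_mult_vec_def riordan_def fps_mult_nth atMost_atLeast0 mult_ac)
  finally show "lt_mult_vec (riordan g f) (fps_nth a) i = (g * (a oo f)) $ i" ..
qed

lemma lt_mult_riordan:
  assumes f0: "f $ 0 = 0"
  shows "lt_mult (riordan g f) (riordan h l) = riordan (g * (h oo f)) (l oo f)"
proof (intro ext)
  fix i j
  have "lt_mult (riordan g f) (riordan h l) i j = lt_mult_vec (riordan g f) (fps_nth (h * l ^ j)) i"
    by (simp add: lt_mult_def lt_mult_vec_def riordan_def)
  also have "\<dots> = (g * ((h * l ^ j) oo f)) $ i"
    by (simp add: lt_mult_vec_riordan[OF f0])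
  also have "\<dots> = riordan (g * (h oo f)) (l oo f) i j"
    by (simp add: riordan_def fps_compose_mult_distrib[OF f0] fps_compose_power[OF f0] mult_ac)
  finally show "lt_mult (riordan g f) (riordan h l) i j = riordan (g * (h oo f)) (l oo f) i j" .
qed

lemma riordan_row_sums:
  assumes f0: "f $ 0 = 0" and R: "R * (1 - f) = g"
  shows "lt_mult_vec (riordan g f) (\<lambda>_. 1) = fps_nth R"
proof -
  define ones :: "real fps" where "ones = Abs_fps (\<lambda>_. 1)"
  have "(1 - fps_X) * ones = 1"
    unfolding ones_def fps_inverse_gp'[symmetric] by (rule inverse_mult_eq_1) simp
  then have "((1 - fps_X) * ones) oo f = 1"
    by simp
  then have "(1 - f) * (ones oo f) = 1"
    by (simp add: fps_compose_mult_distrib[OF f0] fps_compose_sub_distrib f0)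
  then have "g * (ones oo f) = R"
    by (simp flip: R add: mult.assoc)
  moreover have "fps_nth ones = (\<lambda>_. 1)"
    by (simp add: ones_def fun_eq_iff)
  ultimately show ?thesis
    by (metis lt_mult_vec_riordan[OF f0])
qed

lemma riordan_1_X: "riordan 1 fps_X = imat_one"
  by (intro ext) (simp add: riordan_def imat_one_def)

lemma lt_mult_one_left: "lt_mult imat_one M = M"
proof (intro ext)
  fix i j
  have "lt_mult imat_one M i j = (\<Sum>k\<le>i. if i = k then M i j else 0)"
    unfolding lt_mult_def imat_one_def by (intro sum.cong) auto
  then show "lt_mult imat_one M i j = M i j" by simp
qed

lemma lt_mult_one_right:
  assumes "lower_triangular M"
  shows "lt_mult M imat_one = M"
proof (intro ext)
  fix i j
  have "lt_mult M imat_one i j = (\<Sum>k\<le>i. if j = k then M i j else 0)"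
    unfolding lt_mult_def imat_one_def by (intro sum.cong) auto
  then show "lt_mult M imat_one i j = M i j"
    using assms by (auto simp: lower_triangular_def)
qed

lemma lt_mult_assoc:
  assumes "lower_triangular B"
  shows "lt_mult (lt_mult A B) C = lt_mult A (lt_mult B C)"
proof (intro ext)
  fix i j
  have inner: "(\<Sum>l\<le>k. B k l * C l j) = (\<Sum>l\<le>i. B k l * C l j)" if "k \<le> i" for k
    by (rule sum.mono_neutral_left) (use assms that in \<open>auto simp: lower_triangular_def\<close>)
  have "lt_mult A (lt_mult B C) i j = (\<Sum>k\<le>i. A i k * (\<Sum>l\<le>i. B k l * C l j))"
    unfolding lt_mult_def by (intro sum.cong refl) (simp add: inner)
  also have "\<dots> = (\<Sum>l\<le>i. (\<Sum>k\<le>i. A i k * B k l) * C l j)"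
    by (simp only: sum_distrib_left sum_distrib_right mult.assoc) (rule sum.swap)
  finally show "lt_mult (lt_mult A B) C i j = lt_mult A (lt_mult B C) i j"
    by (simp add: lt_mult_def)
qed

lemma lt_inverse_eqI:
  assumes "lower_triangular A" "lower_triangular B"
    and "lt_mult A B = imat_one" "lt_mult B A = imat_one"
  shows "lt_inverse A = B"
  unfolding lt_inverse_def
proof (rule the_equality)
  fix B' assume B': "lower_triangular B' \<and> lt_mult A B' = imat_one \<and> lt_mult B' A = imat_one"
  have "B' = lt_mult B' (lt_mult A B)"
    using assms B' by (simp add: lt_mult_one_right)
  also have "\<dots> = lt_mult (lt_mult B' A) B"
    using assms by (simp add: lt_mult_assoc)
  also have "\<dots> = B"
    using B' by (simp add: lt_mult_one_left)
  finally show "B' = B" .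
qed (use assms in blast)

lemma fps_inv_nth_0 [simp]: "fps_inv f $ 0 = 0"
  by (simp add: fps_inv_def)

lemma lt_inverse_riordan:
  assumes f0: "f $ 0 = 0" and f1: "f $ 1 \<noteq> 0" and g0: "g $ 0 \<noteq> 0"
  shows "lt_inverse (riordan g f) = riordan (inverse (g oo fps_inv f)) (fps_inv f)"
proof (rule lt_inverse_eqI)
  have "inverse (g oo fps_inv f) oo f = inverse g"
    using g0 by (simp add: fps_inverse_compose[OF f0] fps_compose_assoc[symmetric] f0 fps_inv[OF f0 f1])
  then show "lt_mult (riordan g f) (riordan (inverse (g oo fps_inv f)) (fps_inv f)) = imat_one"
    using g0 by (simp add: lt_mult_riordan[OF f0] fps_inv[OF f0 f1] riordan_1_X inverse_mult_eq_1')
  show "lt_mult (riordan (inverse (g oo fps_inv f)) (fps_inv f)) (riordan g f) = imat_one"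
    using g0 by (simp add: lt_mult_riordan fps_inv_right[OF f0 f1] riordan_1_X inverse_mult_eq_1)
qed (simp_all add: lower_triangular_riordan f0)

lemma Dmat_riordan_Dmat:
  assumes "l $ 0 = 0"
  shows "lt_mult (lt_mult Dmat (riordan h l)) Dmat = riordan (h oo - fps_X) (- (l oo - fps_X))"
  using assms unfolding Dmat_def
  by (simp add: lt_mult_riordan fps_compose_uminus fps_compose_mult_distrib)

lemma fps_compose_uminus_X_twice:
  "((f :: 'a::comm_ring_1 fps) oo - fps_X) oo - fps_X = f"
  by (simp add: fps_compose_uminus' fps_eq_iff power_mult_distrib[symmetric])

lemma fps_inv_eqI:
  fixes a b :: "'a::field fps"
  assumes a0: "a $ 0 = 0" and a1: "a $ 1 \<noteq> 0" and b0: "b $ 0 = 0" and ab: "a oo b = fps_X"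
  shows "fps_inv a = b"
proof -
  have "fps_inv a = fps_inv a oo (a oo b)"
    by (simp add: ab)
  also have "\<dots> = b"
    by (simp add: fps_compose_assoc[OF b0 a0] fps_inv[OF a0 a1] b0)
  finally show ?thesis .
qed

lemma fps_numeral_mult_nth [simp]: "(numeral k * (f :: 'a::comm_semiring_1 fps)) $ n = numeral k * f $ n"
  by (simp add: fps_numeral_fps_const)

lemma central_binomial_Suc:
  "real ((2 * Suc n) choose Suc n) * (real n + 1) = 2 * (2 * real n + 1) * real ((2 * n) choose n)"
proof -
  define A B where "A = real ((2 * Suc n) choose Suc n)" and "B = real ((2 * n) choose n)"
  define F where "F = (real n + 1) * (fact n)^2"
  have A: "A * (fact (Suc n))^2 = fact (2 * Suc n)" and B: "B * (fact n)^2 = fact (2 * n)"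
    unfolding A_def B_def by (subst binomial_fact; simp add: power2_eq_square)+
  have "(A * (real n + 1)) * F = A * (fact (Suc n))^2"
    by (simp add: F_def fact_Suc power2_eq_square algebra_simps)
  also have "\<dots> = (2 * real n + 1) * (2 * real n + 2) * fact (2 * n)"
    unfolding A by (simp add: fact_Suc algebra_simps)
  also have "\<dots> = (2 * (2 * real n + 1) * B) * F"
    unfolding B[symmetric] by (simp add: F_def algebra_simps)
  finally have "(A * (real n + 1)) * F = (2 * (2 * real n + 1) * B) * F" .
  moreover have "F \<noteq> 0"
    by (simp add: F_def add_nonneg_eq_0_iff)
  ultimately show ?thesis
    unfolding A_def B_def by simp
qed

definition central_binomial_fps :: "real fps" where
  "central_binomial_fps = Abs_fps (\<lambda>n. real ((2 * n) choose n))"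

definition catalan_fps :: "real fps" where
  "catalan_fps = Abs_fps catalan"

lemma central_binomial_fps_deriv:
  "(1 - 4 * fps_X) * fps_deriv central_binomial_fps = 2 * central_binomial_fps"
proof (rule fps_ext)
  fix n
  show "((1 - 4 * fps_X) * fps_deriv central_binomial_fps) $ n = (2 * central_binomial_fps) $ n"
    using central_binomial_Suc[of n] central_binomial_Suc[of "n - 1"]
    by (cases n) (simp_all add: central_binomial_fps_def algebra_simps)
qed

lemma central_binomial_fps_square: "(1 - 4 * fps_X) * central_binomial_fps ^ 2 = 1"
proof -
  let ?A = "central_binomial_fps"
  have "fps_deriv ((1 - 4 * fps_X) * ?A ^ 2) = 2 * ?A * ((1 - 4 * fps_X) * fps_deriv ?A) - 4 * ?A ^ 2"
    by (simp add: fps_deriv_power' algebra_simps power2_eq_square)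
  also have "\<dots> = 0"
    by (simp add: central_binomial_fps_deriv power2_eq_square)
  finally have "fps_deriv ((1 - 4 * fps_X) * ?A ^ 2) = 0" .
  moreover have "((1 - 4 * fps_X) * ?A ^ 2) $ 0 = 1"
    by (simp add: central_binomial_fps_def fps_mult_nth power2_eq_square)
  ultimately show ?thesis
    by (metis fps_deriv_eq_0_iff fps_const_1_eq_1)
qed

lemma central_binomial_fps_catalan_fps:
  "(1 - 4 * fps_X) * central_binomial_fps = 1 - 2 * fps_X * catalan_fps"
proof (rule fps_ext)
  fix n
  show "((1 - 4 * fps_X) * central_binomial_fps) $ n = (1 - 2 * fps_X * catalan_fps) $ n"
  proof (cases n)
    case (Suc m)
    have "((1 - 4 * fps_X) * central_binomial_fps) $ n
          = central_binomial_fps $ Suc m - 4 * central_binomial_fps $ m"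
      using Suc by (simp add: left_diff_distrib mult.assoc)
    also have "\<dots> = - 2 * catalan m"
      using central_binomial_Suc[of m]
      by (simp add: central_binomial_fps_def catalan_def field_simps del: binomial_Suc_Suc)
    finally show ?thesis
      using Suc by (simp add: catalan_fps_def mult.assoc)
  qed (simp add: central_binomial_fps_def)
qed

lemma central_binomial_fps_inverse: "(1 - 2 * fps_X * catalan_fps) * central_binomial_fps = 1"
  unfolding central_binomial_fps_catalan_fps[symmetric]
  using central_binomial_fps_square by (simp add: power2_eq_square mult.assoc)

lemma catalan_fps_equation: "catalan_fps = 1 + fps_X * catalan_fps ^ 2"
proof -
  have "(1 - 2 * fps_X * catalan_fps) ^ 2 = (1 - 4 * fps_X) * ((1 - 4 * fps_X) * central_binomial_fps ^ 2)"
    unfolding central_binomial_fps_catalan_fps[symmetric] by (simp add: power2_eq_square ac_simps)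
  then have "(1 - 2 * fps_X * catalan_fps) ^ 2 = 1 - 4 * fps_X"
    by (simp add: central_binomial_fps_square)
  then have "fps_X * (4 * (1 + fps_X * catalan_fps ^ 2 - catalan_fps)) = (0 :: real fps)"
    by (simp add: algebra_simps power2_eq_square)
  then have "1 + fps_X * catalan_fps ^ 2 - catalan_fps = 0"
    by (metis mult_eq_0_iff fps_X_neq_zero zero_neq_numeral)
  then show ?thesis
    by simp
qed

lemma catalan_fps_times_one_minus_X_catalan_fps:
  "catalan_fps * (1 - fps_X * catalan_fps) = 1"
proof -
  have "catalan_fps * (1 - fps_X * catalan_fps) = catalan_fps - fps_X * catalan_fps ^ 2"
    by (simp add: algebra_simps power2_eq_square)
  also have "\<dots> = 1"
    by (subst (1) catalan_fps_equation) simp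
  finally show ?thesis .
qed

lemma two_central_binomial_minus_catalan_fps:
  "(2 * central_binomial_fps - catalan_fps) * (1 - fps_X * catalan_fps) = central_binomial_fps"
proof -
  have "(2 * central_binomial_fps - catalan_fps) * (1 - fps_X * catalan_fps)
      = central_binomial_fps + (1 - 2 * fps_X * catalan_fps) * central_binomial_fps
        - catalan_fps * (1 - fps_X * catalan_fps)"
    by (simp add: algebra_simps)
  then show ?thesis
    by (simp only: catalan_fps_times_one_minus_X_catalan_fps central_binomial_fps_inverse) simp
qed

lemma fps_nth_two_central_binomial_minus_catalan:
  "fps_nth (2 * central_binomial_fps - catalan_fps) = (\<lambda>n. (2 * real n + 1) * catalan n)"
  by (simp add: fun_eq_iff central_binomial_fps_def catalan_fps_def catalan_def field_simps)

lemma fps_inv_X_times_1_plus_X_compose_uminus_X: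
  "fps_inv (fps_X * (1 + fps_X)) oo - fps_X = - fps_X * catalan_fps"
proof -
  define C' where "C' = catalan_fps oo - fps_X"
  have "C' = 1 - fps_X * C' ^ 2"
    using arg_cong[OF catalan_fps_equation, of "\<lambda>f. f oo - fps_X"]
    by (simp add: C'_def fps_compose_add_distrib fps_compose_mult_distrib fps_compose_power[symmetric]
                  fps_compose_uminus)
  moreover have "(fps_X * (1 + fps_X)) oo (fps_X * C') = fps_X * (C' + fps_X * C' ^ 2)"
    by (simp add: fps_compose_mult_distrib fps_compose_add_distrib algebra_simps power2_eq_square)
  ultimately have "(fps_X * (1 + fps_X)) oo (fps_X * C') = fps_X"
    by (simp add: eq_diff_eq)
  then have "fps_inv (fps_X * (1 + fps_X)) = fps_X * C'"
    by (intro fps_inv_eqI) (simp_all add: fps_mult_nth)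
  then show ?thesis
    by (simp add: C'_def fps_compose_mult_distrib fps_compose_uminus fps_compose_uminus_X_twice)
qed

lemma Dmat_inverse_FS_Dmat:
  "lt_mult (lt_mult Dmat (lt_inverse FS)) Dmat = riordan 1 (fps_X * catalan_fps)"
  unfolding FS_def
  by (simp add: lt_inverse_riordan fps_mult_nth Dmat_riordan_Dmat fps_inv_X_times_1_plus_X_compose_uminus_X)

lemma Dmat_inverse_LS_Dmat:
  "lt_mult (lt_mult Dmat (lt_inverse LS)) Dmat = riordan central_binomial_fps (fps_X * catalan_fps)"
proof -
  let ?\<psi> = "fps_inv (fps_X * (1 + fps_X)) :: real fps"
  have "inverse ((1 + 2 * fps_X) oo ?\<psi>) oo - fps_X = inverse ((1 + 2 * fps_X) oo (?\<psi> oo - fps_X))"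
    by (simp add: fps_inverse_compose fps_compose_assoc)
  also have "\<dots> = inverse (1 - 2 * fps_X * catalan_fps)"
    by (simp add: fps_inv_X_times_1_plus_X_compose_uminus_X fps_compose_add_distrib fps_compose_mult_distrib mult.assoc)
  also have "\<dots> = central_binomial_fps"
    by (rule fps_inverse_unique[OF central_binomial_fps_inverse])
  finally show ?thesis
    unfolding LS_def
    by (simp add: lt_inverse_riordan fps_mult_nth Dmat_riordan_Dmat fps_inv_X_times_1_plus_X_compose_uminus_X)
qed

theorem corollary3p4:
  shows "lt_mult_vec (lt_mult (lt_mult Dmat (lt_inverse FS)) Dmat) (\<lambda>_. 1) = (\<lambda>n. catalan n)
     \<and> lt_mult_vec (lt_mult (lt_mult Dmat (lt_inverse LS)) Dmat) (\<lambda>_. 1)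
           = (\<lambda>n. (2 * real n + 1) * catalan n)"
proof
  have "lt_mult_vec (riordan 1 (fps_X * catalan_fps)) (\<lambda>_. 1) = fps_nth catalan_fps"
    by (intro riordan_row_sums) (simp_all add: catalan_fps_times_one_minus_X_catalan_fps)
  then show "lt_mult_vec (lt_mult (lt_mult Dmat (lt_inverse FS)) Dmat) (\<lambda>_. 1) = (\<lambda>n. catalan n)"
    by (simp add: Dmat_inverse_FS_Dmat catalan_fps_def fun_eq_iff)
  have "lt_mult_vec (riordan central_binomial_fps (fps_X * catalan_fps)) (\<lambda>_. 1)
      = fps_nth (2 * central_binomial_fps - catalan_fps)"
    by (intro riordan_row_sums) (simp_all add: two_central_binomial_minus_catalan_fps)
  then show "lt_mult_vec (lt_mult (lt_mult Dmat (lt_inverse LS)) Dmat) (\<lambda>_. 1)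
      = (\<lambda>n. (2 * real n + 1) * catalan n)"
    by (simp only: Dmat_inverse_LS_Dmat fps_nth_two_central_binomial_minus_catalan)
qed

end
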